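(* Let $E$ be a real vector space of dimension $2$ and let $f,g$ be linear endomorphisms of $E$. Let $(t_n)_{n\in\mathbb{N}}$ be a strictly increasing sequence of integers with $t_0=1$. Then $$\big(\forall n\in\mathbb{N},\ \exp(t_n f+g)=\exp(t_n f)\circ\exp(g)\big)\iff f\circ g=g\circ f.$$
   Context: $\exp$ denotes the exponential of a linear endomorphism, $\exp(u)=\sum_{k\ge 0}u^k/k!$. *)

theory Defs
  imports "HOL-Analysis.Analysis"
begin

text \<open>Exponential of a linear endomorphism u of a finite-dimensional real space:
  exp(u) = sum over k of u^k / k!, with u^k the k-fold composition (evaluated pointwise;
  the series converges absolutely in finite dimension).\<close>
definition lexp :: "('a::euclidean_space \<Rightarrow> 'a) \<Rightarrow> ('a \<Rightarrow> 'a)" where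
  "lexp u = (\<lambda>x. \<Sum>k. (1 / fact k) *\<^sub>R (u ^^ k) x)"

end

theory Submission
  imports Defs
begin

text \<open>
  Split \<open>f\<close> and \<open>g\<close> into scalar and traceless parts \<open>A\<close>, \<open>B\<close>; scalars commute with everything
  and factor out of \<open>exp\<close>. A traceless endomorphism \<open>X\<close> of the plane satisfies \<open>X\<^sup>2 = d\<close>, hence
  \<open>exp X = cosh \<surd>d + (sinh \<surd>d / \<surd>d) X\<close>. If \<open>AB \<noteq> BA\<close>, comparing traceless parts of
  \<open>exp (A + B) = exp A exp B\<close> shows that \<open>sinh \<surd>d / \<surd>d\<close> vanishes at \<open>d = A\<^sup>2, B\<^sup>2, (A + B)\<^sup>2\<close>:
  otherwise the commutator lies in the span of \<open>A\<close> and \<open>B\<close>, which leads to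
  \<open>sinhc (\<beta> - \<alpha>) = sinhc \<beta> \<cdot> exp \<alpha>\<close>, and this forces \<open>\<alpha> = \<beta> = 0\<close>.
  These zeros are the numbers \<open>-(k\<pi>)\<^sup>2\<close>, so with \<open>A\<close> replaced by \<open>t\<^sub>n A\<close> each value
  \<open>t\<^sub>n\<^sup>2 a + 2 t\<^sub>n s + b\<close> is \<open>-\<pi>\<^sup>2\<close> times a square, where \<open>A\<^sup>2 = a\<close>, \<open>B\<^sup>2 = b\<close> and
  \<open>AB + BA = 2s\<close>. An integer quadratic taking square values at arbitrarily large integers has
  zero discriminant, so \<open>s\<^sup>2 = ab\<close>. The commutator \<open>K\<close> then satisfies \<open>K\<^sup>2 = 0\<close> and \<open>AK = -KA\<close>
  while \<open>A\<^sup>2 = a < 0\<close>, which in the plane forces \<open>K = 0\<close>.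
\<close>

section \<open>Real functions\<close>

definition sinhc :: "real \<Rightarrow> real"
  where "sinhc x = (if x = 0 then 1 else sinh x / x)"

definition cosh_sqrt :: "real \<Rightarrow> real"
  where "cosh_sqrt d = (if d \<ge> 0 then cosh (sqrt d) else cos (sqrt (- d)))"

definition sinhc_sqrt :: "real \<Rightarrow> real"
  where "sinhc_sqrt d = (if d \<ge> 0 then sinhc (sqrt d) else sin (sqrt (- d)) / sqrt (- d))"

lemma even_power_eq_square_power: "even n \<Longrightarrow> (x::real) ^ n = (x\<^sup>2) ^ (n div 2)"
  by (metis dvd_mult_div_cancel power_mult)

lemma odd_power_eq_square_power: "odd n \<Longrightarrow> (x::real) ^ n = x * (x\<^sup>2) ^ (n div 2)"
  by (elim oddE) (simp add: power_mult)

lemma cosh_sqrt_sums: "(\<lambda>n. if even n then d ^ (n div 2) / fact n else 0) sums cosh_sqrt d"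
proof (cases "d \<ge> 0")
  case True
  have "(\<lambda>n. if even n then sqrt d ^ n /\<^sub>R fact n else 0) sums cosh (sqrt d)"
    by (rule cosh_converges)
  moreover have "sqrt d ^ n = d ^ (n div 2)" if "even n" for n
    using even_power_eq_square_power[OF that, of "sqrt d"] True by simp
  ultimately show ?thesis
    using True by (simp add: cosh_sqrt_def divide_inverse_commute cong: if_cong)
next
  case False
  have "(\<lambda>n. cos_coeff n *\<^sub>R sqrt (- d) ^ n) sums cos (sqrt (- d))"
    by (rule cos_converges)
  moreover have "cos_coeff n *\<^sub>R sqrt (- d) ^ n = (if even n then d ^ (n div 2) / fact n else 0)" for n
  proof (cases "even n")
    case True
    have "sqrt (- d) ^ n = (- d) ^ (n div 2)"
      using even_power_eq_square_power[OF True, of "sqrt (- d)"] False by simp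
    then show ?thesis
      using True by (simp add: cos_coeff_def power_minus')
  qed (simp add: cos_coeff_def)
  ultimately show ?thesis
    using False by (simp add: cosh_sqrt_def)
qed

lemma sinh_div_sums:
  fixes x :: real
  assumes "x \<noteq> 0"
  shows "(\<lambda>n. if odd n then (x\<^sup>2) ^ (n div 2) / fact n else 0) sums (sinh x / x)"
proof -
  have "(\<lambda>n. (if even n then 0 else x ^ n /\<^sub>R fact n) / x) sums (sinh x / x)"
    by (intro sums_divide sinh_converges)
  moreover have "(if even n then 0 else x ^ n /\<^sub>R fact n) / x = (if odd n then (x\<^sup>2) ^ (n div 2) / fact n else 0)" for n
    using assms odd_power_eq_square_power[of n x] by (simp add: divide_inverse_commute)
  ultimately show ?thesis
    by simp
qed

lemma sin_div_sums:
  fixes x :: real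
  assumes "x \<noteq> 0"
  shows "(\<lambda>n. if odd n then (- x\<^sup>2) ^ (n div 2) / fact n else 0) sums (sin x / x)"
proof -
  have "(\<lambda>n. sin_coeff n *\<^sub>R x ^ n / x) sums (sin x / x)"
    by (intro sums_divide sin_converges)
  moreover have "sin_coeff n *\<^sub>R x ^ n / x = (if odd n then (- x\<^sup>2) ^ (n div 2) / fact n else 0)" for n
  proof (cases "even n")
    case False
    then have "(n - Suc 0) div 2 = n div 2"
      by (auto elim!: oddE)
    then show ?thesis
      using False assms odd_power_eq_square_power[of n x] by (simp add: sin_coeff_def power_minus')
  qed (simp add: sin_coeff_def)
  ultimately show ?thesis
    by simp
qed

lemma sinhc_sqrt_sums: "(\<lambda>n. if odd n then d ^ (n div 2) / fact n else 0) sums sinhc_sqrt d"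
proof -
  consider "d > 0" | "d = 0" | "d < 0"
    by linarith
  then show ?thesis
  proof cases
    case 1
    then have "(sqrt d)\<^sup>2 = d"
      by simp
    then show ?thesis
      using 1 sinh_div_sums[of "sqrt d", unfolded \<open>(sqrt d)\<^sup>2 = d\<close>]
      by (simp add: sinhc_sqrt_def sinhc_def)
  next
    case 2
    have "(if odd n then d ^ (n div 2) / fact n else 0) = (if n = 1 then 1 else 0)" for n :: nat
      using 2 by (auto elim!: oddE)
    then show ?thesis
      using 2 sums_single[of 1 "\<lambda>_. 1::real"] by (simp add: sinhc_sqrt_def sinhc_def)
  next
    case 3
    then have "- (sqrt (- d))\<^sup>2 = d"
      by simp
    then show ?thesis
      using 3 sin_div_sums[of "sqrt (- d)", unfolded \<open>- (sqrt (- d))\<^sup>2 = d\<close>]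
      by (simp add: sinhc_sqrt_def)
  qed
qed

lemma cosh_sqrt_square: "cosh_sqrt (x\<^sup>2) = cosh x"
  by (simp add: cosh_sqrt_def)

lemma sinhc_minus: "sinhc (- x) = sinhc x"
  by (simp add: sinhc_def)

lemma sinhc_sqrt_square: "sinhc_sqrt (x\<^sup>2) = sinhc x"
proof -
  have "sinhc \<bar>x\<bar> = sinhc x"
    by (cases "x \<ge> 0") (simp_all add: abs_of_neg sinhc_minus)
  then show ?thesis
    by (simp add: sinhc_sqrt_def)
qed

lemma mult_sinhc: "x * sinhc x = sinh x"
  by (simp add: sinhc_def)

lemma cosh_sqrt_sinhc_sqrt_identity: "(cosh_sqrt d)\<^sup>2 - d * (sinhc_sqrt d)\<^sup>2 = 1"
proof (cases "d \<ge> 0")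
  case True
  then have "d * (sinhc_sqrt d)\<^sup>2 = (sqrt d * sinhc (sqrt d))\<^sup>2"
    by (simp add: sinhc_sqrt_def power_mult_distrib)
  then have "d * (sinhc_sqrt d)\<^sup>2 = (sinh (sqrt d))\<^sup>2"
    by (simp only: mult_sinhc)
  then show ?thesis
    using True by (simp add: cosh_sqrt_def cosh_square_eq)
next
  case False
  then have "d * (sinhc_sqrt d)\<^sup>2 = - (sin (sqrt (- d)))\<^sup>2"
    by (simp add: sinhc_sqrt_def power_divide)
  then show ?thesis
    using False sin_cos_squared_add[of "sqrt (- d)"] by (simp add: cosh_sqrt_def)
qed

lemma sinhc_sqrt_eq_0E:
  assumes "sinhc_sqrt d = 0"
  obtains k :: nat where "k > 0" "d = - (real k * pi)\<^sup>2"
proof -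
  have "d < 0"
  proof (rule ccontr)
    assume "\<not> d < 0"
    then have "sinhc (sqrt d) > 0"
      by (simp add: sinhc_def)
    then show False
      using assms \<open>\<not> d < 0\<close> by (simp add: sinhc_sqrt_def)
  qed
  then have "sin (sqrt (- d)) = 0"
    using assms by (simp add: sinhc_sqrt_def)
  then obtain i :: int where i: "sqrt (- d) = of_int i * pi"
    by (auto simp: sin_zero_iff_int2)
  moreover have "sqrt (- d) > 0"
    using \<open>d < 0\<close> by simp
  ultimately have "i > 0"
    by (simp add: zero_less_mult_iff)
  have "d = - (sqrt (- d))\<^sup>2"
    using \<open>d < 0\<close> by simp
  then show ?thesis
    using i \<open>i > 0\<close> by (intro that[of "nat i"]) simp_all
qed

definition exprel :: "real \<Rightarrow> real"
  where "exprel y = (if y = 0 then 1 else (exp y - 1) / y)"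

lemma one_add_less_exp: "y \<noteq> 0 \<Longrightarrow> 1 + y < exp (y::real)"
  using exp_minus_greater[of "- y"] by simp

lemma exprel_less_same_sign:
  assumes "a < b" "0 < a \<or> b < 0"
  shows "exprel a < exprel b"
proof -
  have nonzero: "x \<noteq> 0" if "a \<le> x" "x \<le> b" for x
    using assms that by auto
  have "DERIV (\<lambda>z. (exp z - 1) / z) (x::real) :> (x * exp x - (exp x - 1)) / x\<^sup>2" if "x \<noteq> 0" for x
    using that by (auto intro!: derivative_eq_intros simp: power2_eq_square field_simps)
  moreover have "(x * exp x - (exp x - 1)) / x\<^sup>2 > 0" if "x \<noteq> 0" for x :: real
  proof -
    have "(1 - x) * exp x < exp (- x) * exp x"
      using one_add_less_exp[of "- x"] that by simp
    then show ?thesis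
      using that by (simp add: algebra_simps flip: exp_add)
  qed
  ultimately have "(exp a - 1) / a < (exp b - 1) / b"
    using DERIV_pos_imp_increasing[OF assms(1), of "\<lambda>z. (exp z - 1) / z"] nonzero by blast
  then show ?thesis
    using nonzero[of a] nonzero[of b] assms(1) by (simp add: exprel_def)
qed

lemma strict_mono_exprel: "strict_mono exprel"
proof
  fix a b :: real
  assume "a < b"
  have above: "exprel y > 1" if "y > 0" for y
    using one_add_less_exp[of y] that by (simp add: exprel_def field_simps)
  have below: "exprel y < 1" if "y < 0" for y
    using one_add_less_exp[of y] that by (simp add: exprel_def field_simps)
  consider "0 < a \<or> b < 0" | "a \<le> 0" "0 \<le> b"
    by linarith
  then show "exprel a < exprel b"
  proof cases
    case 2
    have "exprel 0 = 1"
      by (simp add: exprel_def)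
    then show ?thesis
      using \<open>a < b\<close> 2 above[of b] below[of a] by (cases "a = 0"; cases "b = 0") auto
  qed (use \<open>a < b\<close> exprel_less_same_sign in auto)
qed

lemma sinhc_eq_exprel: "sinhc x = exp (- x) * exprel (2 * x)"
proof (cases "x = 0")
  case False
  have "exp (- x) * exp (2 * x) = exp x"
    by (simp flip: exp_add)
  then show ?thesis
    using False by (simp add: sinhc_def exprel_def sinh_def field_simps exp_minus)
qed (simp add: sinhc_def exprel_def)

lemma sinhc_diff_eq_mult_exp_iff: "sinhc (x - y) = sinhc x * exp y \<longleftrightarrow> y = 0"
proof
  assume "sinhc (x - y) = sinhc x * exp y"
  then have "exp (y - x) * exprel (2 * x - 2 * y) = exp (y - x) * exprel (2 * x)"
    by (simp add: sinhc_eq_exprel algebra_simps flip: exp_add)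
  then have "exprel (2 * x - 2 * y) = exprel (2 * x)"
    by simp
  then show "y = 0"
    using strict_mono_eq[OF strict_mono_exprel] by simp
qed simp

lemma sinhc_addition_system_imp_zero:
  assumes "sinhc (\<beta> - \<alpha>) = sinhc \<beta> * cosh \<alpha> + \<alpha> * (sinhc \<beta> * sinhc \<alpha>)"
    and "sinhc (\<beta> - \<alpha>) = cosh \<beta> * sinhc \<alpha> + \<beta> * (sinhc \<beta> * sinhc \<alpha>)"
  shows "\<alpha> = 0 \<and> \<beta> = 0"
proof -
  have "sinhc (\<beta> - \<alpha>) = sinhc \<beta> * (cosh \<alpha> + \<alpha> * sinhc \<alpha>)"
    using assms(1) by (simp add: algebra_simps)
  then have "\<alpha> = 0"
    by (simp add: mult_sinhc cosh_plus_sinh sinhc_diff_eq_mult_exp_iff)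
  have "sinhc (\<alpha> - \<beta>) = sinhc \<alpha> * (cosh \<beta> + \<beta> * sinhc \<beta>)"
    using assms(2) sinhc_minus[of "\<alpha> - \<beta>"] by (simp add: algebra_simps)
  then have "\<beta> = 0"
    by (simp add: mult_sinhc cosh_plus_sinh sinhc_diff_eq_mult_exp_iff)
  with \<open>\<alpha> = 0\<close> show ?thesis ..
qed

section \<open>Quadratics with square values\<close>

lemma abs_le_abs_if_square_diff:
  fixes P Q D :: int
  assumes "P\<^sup>2 - Q\<^sup>2 = D" "D \<noteq> 0"
  shows "\<bar>P\<bar> \<le> \<bar>D\<bar>"
proof -
  have D: "D = (\<bar>P\<bar> - \<bar>Q\<bar>) * (\<bar>P\<bar> + \<bar>Q\<bar>)"
    using assms(1) by (simp add: power2_eq_square algebra_simps flip: abs_mult)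
  then have "\<bar>P\<bar> - \<bar>Q\<bar> \<noteq> 0"
    using assms(2) by auto
  then have "\<bar>\<bar>P\<bar> - \<bar>Q\<bar>\<bar> \<ge> 1"
    by arith
  have "\<bar>P\<bar> \<le> 1 * (\<bar>P\<bar> + \<bar>Q\<bar>)"
    by simp
  also have "\<dots> \<le> \<bar>\<bar>P\<bar> - \<bar>Q\<bar>\<bar> * (\<bar>P\<bar> + \<bar>Q\<bar>)"
    using \<open>\<bar>\<bar>P\<bar> - \<bar>Q\<bar>\<bar> \<ge> 1\<close> by (intro mult_right_mono) auto
  also have "\<dots> = \<bar>D\<bar>"
    by (simp add: D abs_mult)
  finally show ?thesis .
qed

lemma strict_mono_int_ge: "strict_mono (t :: nat \<Rightarrow> int) \<Longrightarrow> t 0 + int n \<le> t n"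
proof (induction n)
  case (Suc n)
  then have "t n < t (Suc n)"
    by (simp add: strict_mono_def)
  then show ?case
    using Suc by simp
qed simp

lemma square_values_imp_discriminant_zero:
  fixes t m :: "nat \<Rightarrow> int" and k N j :: int
  assumes "strict_mono t" "k \<noteq> 0"
    and squares: "\<And>n. (m n)\<^sup>2 = k\<^sup>2 * (t n)\<^sup>2 - N * t n + j\<^sup>2"
  shows "N\<^sup>2 = 4 * k\<^sup>2 * j\<^sup>2"
proof (rule ccontr)
  define D where "D = N\<^sup>2 - 4 * k\<^sup>2 * j\<^sup>2"
  assume "N\<^sup>2 \<noteq> 4 * k\<^sup>2 * j\<^sup>2"
  then have "D \<noteq> 0"
    by (simp add: D_def)
  have bound: "\<bar>2 * k\<^sup>2 * t n - N\<bar> \<le> \<bar>D\<bar>" for n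
  proof (rule abs_le_abs_if_square_diff[OF _ \<open>D \<noteq> 0\<close>])
    show "(2 * k\<^sup>2 * t n - N)\<^sup>2 - (2 * k * m n)\<^sup>2 = D"
      unfolding D_def power_mult_distrib squares by (simp add: power2_eq_square algebra_simps)
  qed
  define n where "n = nat (\<bar>D\<bar> + \<bar>N\<bar> + \<bar>t 0\<bar>)"
  have "int n = \<bar>D\<bar> + \<bar>N\<bar> + \<bar>t 0\<bar>"
    by (simp add: n_def)
  then have tn: "t n \<ge> \<bar>D\<bar> + \<bar>N\<bar>"
    using strict_mono_int_ge[OF assms(1), of n] abs_ge_minus_self[of "t 0"] by linarith
  have "k\<^sup>2 \<ge> 1"
    using assms(2) by (simp add: int_one_le_iff_zero_less)
  then have "k\<^sup>2 * t n \<ge> 1 * t n"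
    using tn by (intro mult_right_mono) auto
  then have "\<bar>2 * k\<^sup>2 * t n - N\<bar> > \<bar>D\<bar>"
    using tn \<open>D \<noteq> 0\<close> by linarith
  then show False
    using bound[of n] by linarith
qed

lemma sinhc_sqrt_zeros_along_quadratic:
  fixes t :: "nat \<Rightarrow> int" and a b s :: real
  assumes "strict_mono t" "t 0 = 1"
    and "sinhc_sqrt a = 0" "sinhc_sqrt b = 0"
    and zeros: "\<And>n. sinhc_sqrt ((t n)\<^sup>2 * a + 2 * t n * s + b) = 0"
  shows "s\<^sup>2 = a * b"
proof -
  obtain k :: nat where "k > 0" and a: "a = - (k * pi)\<^sup>2"
    using sinhc_sqrt_eq_0E assms(3) by blast
  obtain j :: nat where b: "b = - (j * pi)\<^sup>2"
    using sinhc_sqrt_eq_0E assms(4) by blast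
  have "\<forall>n. \<exists>i::nat. (t n)\<^sup>2 * a + 2 * t n * s + b = - (i * pi)\<^sup>2"
    using sinhc_sqrt_eq_0E zeros by metis
  then obtain m :: "nat \<Rightarrow> nat" where m: "\<And>n. (t n)\<^sup>2 * a + 2 * t n * s + b = - (m n * pi)\<^sup>2"
    by metis
  define N :: int where "N = (int k)\<^sup>2 + (int j)\<^sup>2 - (int (m 0))\<^sup>2"
  have "2 * s = N * pi\<^sup>2"
    using m[of 0] assms(2) unfolding a b N_def by (simp add: algebra_simps)
  then have s: "s = N * pi\<^sup>2 / 2"
    by simp
  have "(int (m n))\<^sup>2 = (int k)\<^sup>2 * (t n)\<^sup>2 - N * t n + (int j)\<^sup>2" for n
  proof -
    have "((real (m n))\<^sup>2 - ((real k)\<^sup>2 * (t n)\<^sup>2 - N * t n + (real j)\<^sup>2)) * pi\<^sup>2 = 0"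
      using m[of n] s unfolding a b by (simp add: algebra_simps)
    then have "real_of_int ((int (m n))\<^sup>2) = real_of_int ((int k)\<^sup>2 * (t n)\<^sup>2 - N * t n + (int j)\<^sup>2)"
      by simp
    then show ?thesis
      by (simp only: of_int_eq_iff)
  qed
  then have "N\<^sup>2 = 4 * (int k)\<^sup>2 * (int j)\<^sup>2"
    using \<open>k > 0\<close> by (intro square_values_imp_discriminant_zero[OF assms(1), of _ "\<lambda>n. int (m n)"]) simp_all
  then have "real_of_int (N\<^sup>2) = 4 * (real k)\<^sup>2 * (real j)\<^sup>2"
    by simp
  then have "(2 * s)\<^sup>2 = 4 * (real k)\<^sup>2 * (real j)\<^sup>2 * (pi\<^sup>2)\<^sup>2"
    unfolding s by (simp add: power_mult_distrib)
  then show ?thesis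
    unfolding a b by (simp add: power_mult_distrib power2_eq_square algebra_simps)
qed

section \<open>Algebras with scalar squares\<close>

lemma exp_eq_if_square_scalar:
  fixes X :: "'b::{real_normed_algebra_1,banach}"
  assumes "X * X = d *\<^sub>R 1"
  shows "exp X = cosh_sqrt d *\<^sub>R 1 + sinhc_sqrt d *\<^sub>R X"
proof -
  have pow: "X ^ n = d ^ (n div 2) *\<^sub>R (if even n then 1 else X)" for n
  proof (induction n)
    case (Suc n)
    then show ?case
      using assms by (cases "even n") (simp_all add: mult.assoc[symmetric])
  qed simp
  have "X ^ n /\<^sub>R fact n = (if even n then d ^ (n div 2) / fact n else 0) *\<^sub>R 1
          + (if odd n then d ^ (n div 2) / fact n else 0) *\<^sub>R X" for n
    by (simp add: pow divide_inverse_commute)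
  moreover have "(\<lambda>n. (if even n then d ^ (n div 2) / fact n else 0) *\<^sub>R 1
          + (if odd n then d ^ (n div 2) / fact n else 0) *\<^sub>R X) sums (cosh_sqrt d *\<^sub>R 1 + sinhc_sqrt d *\<^sub>R X)"
    by (intro sums_add sums_scaleR_left cosh_sqrt_sums sinhc_sqrt_sums)
  ultimately have "(\<lambda>n. X ^ n /\<^sub>R fact n) sums (cosh_sqrt d *\<^sub>R 1 + sinhc_sqrt d *\<^sub>R X)"
    by simp
  then show ?thesis
    unfolding exp_def by (rule sums_unique[symmetric])
qed

lemma exp_scaleR_one_add:
  fixes X :: "'b::{real_normed_algebra_1,banach}"
  shows "exp (c *\<^sub>R 1 + X) = exp c *\<^sub>R exp X"
proof -
  have "exp (c *\<^sub>R (1::'b)) = exp c *\<^sub>R 1"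
    using exp_of_real[of c, where 'a='b] by (simp add: of_real_def)
  then show ?thesis
    by (simp add: exp_add_commuting)
qed

lemma exp_add_scalar_shift_iff:
  fixes X Y :: "'b::{real_normed_algebra_1,banach}"
  shows "exp ((x *\<^sub>R 1 + X) + (y *\<^sub>R 1 + Y)) = exp (x *\<^sub>R 1 + X) * exp (y *\<^sub>R 1 + Y)
    \<longleftrightarrow> exp (X + Y) = exp X * exp Y"
proof -
  have shift: "(x *\<^sub>R 1 + X) + (y *\<^sub>R 1 + Y) = (x + y) *\<^sub>R 1 + (X + Y)"
    by (simp add: algebra_simps)
  show ?thesis
    unfolding shift by (simp add: exp_scaleR_one_add exp_add mult.commute)
qed

lemma commute_if_dependent:
  fixes A B :: "'b::real_algebra_1"
  assumes "l *\<^sub>R A + m *\<^sub>R B = 0" "l \<noteq> 0 \<or> m \<noteq> 0"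
  shows "A * B = B * A"
proof (cases "l = 0")
  case True
  then have "B = 0"
    using assms by simp
  then show ?thesis
    by simp
next
  case False
  have "A = inverse l *\<^sub>R (l *\<^sub>R A)"
    using False by simp
  also have "\<dots> = (- m / l) *\<^sub>R B"
    using assms(1) by (simp add: eq_neg_iff_add_eq_0[symmetric] divide_inverse_commute)
  finally show ?thesis
    by simp
qed

text \<open>The identities satisfied by two traceless \<open>2 \<times> 2\<close> matrices, with \<open>s\<close> their polar form.\<close>

locale scalar_squares =
  fixes A B :: "'b::real_algebra_1" and a b s :: real
  assumes square_A: "A * A = a *\<^sub>R 1"
    and square_B: "B * B = b *\<^sub>R 1"
    and anticommutator: "A * B + B * A = (2 * s) *\<^sub>R 1"
begin

lemma scaleR_left: "scalar_squares (c *\<^sub>R A) B (c\<^sup>2 * a) b (c * s)"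
proof
  show "c *\<^sub>R A * c *\<^sub>R A = (c\<^sup>2 * a) *\<^sub>R 1"
    by (simp add: square_A power2_eq_square)
  show "c *\<^sub>R A * B + B * c *\<^sub>R A = (2 * (c * s)) *\<^sub>R 1"
    using anticommutator by (simp flip: scaleR_add_right)
qed (rule square_B)

lemma square_add: "(A + B) * (A + B) = (a + 2 * s + b) *\<^sub>R 1"
proof -
  have "(A + B) * (A + B) = A * A + (A * B + B * A) + B * B"
    by (simp add: algebra_simps)
  then show ?thesis
    by (simp add: square_A square_B anticommutator scaleR_add_left)
qed

lemma BA_eq: "B * A = (2 * s) *\<^sub>R 1 - A * B"
  using anticommutator by (simp add: eq_diff_eq add.commute)

lemma AA_mult: "A * (A * X) = a *\<^sub>R X"
  by (simp add: mult.assoc[symmetric] square_A)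

lemma BB_mult: "B * (B * X) = b *\<^sub>R X"
  by (simp add: mult.assoc[symmetric] square_B)

lemma ABA_mult: "A * (B * (A * X)) = (2 * s) *\<^sub>R (A * X) - a *\<^sub>R (B * X)"
proof -
  have "A * (B * (A * X)) = A * (((2 * s) *\<^sub>R 1 - A * B) * X)"
    by (simp add: mult.assoc[symmetric] BA_eq)
  then show ?thesis
    by (simp add: left_diff_distrib right_diff_distrib mult.assoc AA_mult)
qed

lemma BAB_mult: "B * (A * (B * X)) = (2 * s) *\<^sub>R (B * X) - b *\<^sub>R (A * X)"
proof -
  have "B * (A * (B * X)) = ((2 * s) *\<^sub>R 1 - A * B) * (B * X)"
    by (simp add: mult.assoc[symmetric] BA_eq)
  then show ?thesis
    by (simp add: left_diff_distrib mult.assoc BB_mult)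
qed

text \<open>
  Rewriting right-nested words with \<open>word_simps\<close> leaves linear combinations of \<open>1\<close>, \<open>A\<close>, \<open>B\<close>
  and \<open>A * B\<close>; flipping \<open>scaleR_add_left\<close> then collects their coefficients.
\<close>

lemmas word_simps = square_A square_B AA_mult BB_mult
  ABA_mult[where X = 1, simplified] BAB_mult[where X = 1, simplified] ABA_mult BAB_mult

lemma anticommute_commutator: "A * (A * B - B * A) + (A * B - B * A) * A = 0"
  by (simp add: algebra_simps word_simps)

lemma commutator_square: "(A * B - B * A) * (A * B - B * A) = (4 * (s\<^sup>2 - a * b)) *\<^sub>R 1"
proof -
  have "(A * B - B * A) * (A * B - B * A) = (2 * s) *\<^sub>R (A * B + B * A) - (4 * a * b) *\<^sub>R 1"
    by (simp add: algebra_simps word_simps; simp add: algebra_simps flip: scaleR_add_left add.assoc)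
  then show ?thesis
    by (simp add: anticommutator power2_eq_square algebra_simps)
qed

lemma commutator_bracket_A: "A * (A * B - B * A) - (A * B - B * A) * A = 4 *\<^sub>R (a *\<^sub>R B - s *\<^sub>R A)"
  by (simp add: algebra_simps word_simps; simp add: algebra_simps flip: scaleR_add_left add.assoc)

lemma commutator_bracket_B: "B * (A * B - B * A) - (A * B - B * A) * B = 4 *\<^sub>R (s *\<^sub>R B - b *\<^sub>R A)"
  by (simp add: algebra_simps word_simps; simp add: algebra_simps flip: scaleR_add_left add.assoc)

lemma commutator_in_span_imp:
  assumes noncomm: "A * B \<noteq> B * A"
    and span: "A * B - B * A = (2 * \<alpha>) *\<^sub>R A + (2 * \<beta>) *\<^sub>R B"
  shows "\<alpha>\<^sup>2 = b \<and> \<beta>\<^sup>2 = a \<and> \<alpha> * \<beta> = - s"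
proof -
  have "4 *\<^sub>R (a *\<^sub>R B - s *\<^sub>R A) = (2 * \<beta>) *\<^sub>R ((2 * \<alpha>) *\<^sub>R A + (2 * \<beta>) *\<^sub>R B)"
  proof -
    have "A * ((2 * \<alpha>) *\<^sub>R A + (2 * \<beta>) *\<^sub>R B) - ((2 * \<alpha>) *\<^sub>R A + (2 * \<beta>) *\<^sub>R B) * A
        = (2 * \<beta>) *\<^sub>R (A * B - B * A)"
      by (simp add: algebra_simps)
    then show ?thesis
      using commutator_bracket_A by (simp only: span)
  qed
  then have "4 *\<^sub>R ((\<alpha> * \<beta> + s) *\<^sub>R A + (\<beta>\<^sup>2 - a) *\<^sub>R B) = 0"
    by (simp add: algebra_simps power2_eq_square)
  then have A_part: "\<alpha> * \<beta> + s = 0 \<and> \<beta>\<^sup>2 - a = 0"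
    using commute_if_dependent noncomm by (metis scaleR_eq_0_iff zero_neq_numeral)
  have "4 *\<^sub>R (s *\<^sub>R B - b *\<^sub>R A) = (- 2 * \<alpha>) *\<^sub>R ((2 * \<alpha>) *\<^sub>R A + (2 * \<beta>) *\<^sub>R B)"
  proof -
    have "B * ((2 * \<alpha>) *\<^sub>R A + (2 * \<beta>) *\<^sub>R B) - ((2 * \<alpha>) *\<^sub>R A + (2 * \<beta>) *\<^sub>R B) * B
        = (- 2 * \<alpha>) *\<^sub>R (A * B - B * A)"
      by (simp add: algebra_simps)
    then show ?thesis
      using commutator_bracket_B by (simp only: span)
  qed
  then have "4 *\<^sub>R ((\<alpha>\<^sup>2 - b) *\<^sub>R A + (\<alpha> * \<beta> + s) *\<^sub>R B) = 0"
    by (simp add: algebra_simps power2_eq_square)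
  then have "\<alpha>\<^sup>2 - b = 0"
    using commute_if_dependent noncomm by (metis scaleR_eq_0_iff zero_neq_numeral)
  with A_part show ?thesis
    by simp
qed

lemma commute_if_exp_coefficients_nonzero:
  assumes nonzero: "sinhc_sqrt a * sinhc_sqrt b \<noteq> 0"
    and exp_eq: "(sinhc_sqrt a * sinhc_sqrt b / 2) *\<^sub>R (A * B - B * A)
      = (sinhc_sqrt (a + 2 * s + b) - sinhc_sqrt a * cosh_sqrt b) *\<^sub>R A
        + (sinhc_sqrt (a + 2 * s + b) - cosh_sqrt a * sinhc_sqrt b) *\<^sub>R B"
  shows "A * B = B * A"
proof (rule ccontr)
  assume noncomm: "A * B \<noteq> B * A"
  define Sa Sb Sc Ca Cb
    where "Sa = sinhc_sqrt a" and "Sb = sinhc_sqrt b" and "Sc = sinhc_sqrt (a + 2 * s + b)"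
      and "Ca = cosh_sqrt a" and "Cb = cosh_sqrt b"
  define \<alpha> \<beta> where "\<alpha> = (Sc - Sa * Cb) / (Sa * Sb)" and "\<beta> = (Sc - Ca * Sb) / (Sa * Sb)"
  have "A * B - B * A = (2 / (Sa * Sb)) *\<^sub>R ((Sa * Sb / 2) *\<^sub>R (A * B - B * A))"
    using nonzero by (simp add: Sa_def Sb_def)
  also have "\<dots> = (2 * \<alpha>) *\<^sub>R A + (2 * \<beta>) *\<^sub>R B"
    unfolding Sa_def Sb_def Sc_def Ca_def Cb_def \<alpha>_def \<beta>_def exp_eq by (simp add: scaleR_add_right)
  finally have span: "A * B - B * A = (2 * \<alpha>) *\<^sub>R A + (2 * \<beta>) *\<^sub>R B" .
  then have ab: "\<alpha>\<^sup>2 = b \<and> \<beta>\<^sup>2 = a \<and> \<alpha> * \<beta> = - s"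
    using commutator_in_span_imp noncomm by blast
  then have "a + 2 * s + b = (\<beta> - \<alpha>)\<^sup>2"
    by (simp add: power2_eq_square algebra_simps)
  then have S: "Sa = sinhc \<beta>" "Ca = cosh \<beta>" "Sb = sinhc \<alpha>" "Cb = cosh \<alpha>" "Sc = sinhc (\<beta> - \<alpha>)"
    using ab unfolding Sa_def Sb_def Sc_def Ca_def Cb_def by (metis sinhc_sqrt_square cosh_sqrt_square)+
  have "Sc = Sa * Cb + \<alpha> * (Sa * Sb)" "Sc = Ca * Sb + \<beta> * (Sa * Sb)"
    using nonzero by (simp_all add: \<alpha>_def \<beta>_def Sa_def Sb_def)
  then have "\<alpha> = 0 \<and> \<beta> = 0"
    unfolding S by (rule sinhc_addition_system_imp_zero)
  with span noncomm show False
    by simp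
qed

lemma sinhc_sqrt_eq_0_if_noncommuting:
  assumes noncomm: "A * B \<noteq> B * A"
    and exp_eq: "sinhc_sqrt (a + 2 * s + b) *\<^sub>R (A + B)
      = (sinhc_sqrt a * cosh_sqrt b) *\<^sub>R A + (cosh_sqrt a * sinhc_sqrt b) *\<^sub>R B
        + (sinhc_sqrt a * sinhc_sqrt b / 2) *\<^sub>R (A * B - B * A)"
  shows "sinhc_sqrt a = 0 \<and> sinhc_sqrt b = 0 \<and> sinhc_sqrt (a + 2 * s + b) = 0"
proof -
  define Sa Sb Sc Ca Cb
    where "Sa = sinhc_sqrt a" and "Sb = sinhc_sqrt b" and "Sc = sinhc_sqrt (a + 2 * s + b)"
      and "Ca = cosh_sqrt a" and "Cb = cosh_sqrt b"
  have eq: "(Sa * Sb / 2) *\<^sub>R (A * B - B * A) = (Sc - Sa * Cb) *\<^sub>R A + (Sc - Ca * Sb) *\<^sub>R B"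
    using exp_eq unfolding Sa_def Sb_def Sc_def Ca_def Cb_def by (simp add: algebra_simps)
  then have "Sa * Sb = 0"
    using commute_if_exp_coefficients_nonzero noncomm
    unfolding Sa_def Sb_def Sc_def Ca_def Cb_def by blast
  have "(Sc - Sa * Cb) *\<^sub>R A + (Sc - Ca * Sb) *\<^sub>R B = 0"
    using eq[unfolded \<open>Sa * Sb = 0\<close>] by simp
  then have "Sc = Sa * Cb \<and> Sc = Ca * Sb"
    using commute_if_dependent noncomm by fastforce
  moreover have "Ca \<noteq> 0" if "Sa = 0"
    using that cosh_sqrt_sinhc_sqrt_identity[of a] by (auto simp: Sa_def Ca_def)
  moreover have "Cb \<noteq> 0" if "Sb = 0"
    using that cosh_sqrt_sinhc_sqrt_identity[of b] by (auto simp: Sb_def Cb_def)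
  ultimately show ?thesis
    using \<open>Sa * Sb = 0\<close> unfolding Sa_def Sb_def Sc_def by auto
qed

end

section \<open>The Banach algebra of endomorphisms\<close>

text \<open>A type copy of \<open>'a \<Rightarrow>\<^sub>L 'a\<close> whose multiplication is composition, so that the exponential
  of Banach algebras applies to linear endomorphisms.\<close>

typedef (overloaded) 'a endo = "UNIV :: ('a::euclidean_space \<Rightarrow>\<^sub>L 'a) set"
  morphisms blinfun_of_endo endo_of_blinfun by simp

setup_lifting type_definition_endo

instantiation endo :: (euclidean_space) real_normed_algebra_1
begin

lift_definition norm_endo :: "'a endo \<Rightarrow> real" is norm .
lift_definition minus_endo :: "'a endo \<Rightarrow> 'a endo \<Rightarrow> 'a endo" is "(-)" .
lift_definition plus_endo :: "'a endo \<Rightarrow> 'a endo \<Rightarrow> 'a endo" is "(+)" .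
lift_definition uminus_endo :: "'a endo \<Rightarrow> 'a endo" is uminus .
lift_definition zero_endo :: "'a endo" is 0 .
lift_definition scaleR_endo :: "real \<Rightarrow> 'a endo \<Rightarrow> 'a endo" is scaleR .
lift_definition times_endo :: "'a endo \<Rightarrow> 'a endo \<Rightarrow> 'a endo" is blinfun_compose .
lift_definition one_endo :: "'a endo" is id_blinfun .

definition dist_endo :: "'a endo \<Rightarrow> 'a endo \<Rightarrow> real"
  where "dist_endo a b = norm (a - b)"

definition uniformity_endo :: "('a endo \<times> 'a endo) filter"
  where "uniformity_endo = (INF e\<in>{0 <..}. principal {(x, y). dist x y < e})"

definition open_endo :: "'a endo set \<Rightarrow> bool"
  where "open_endo S = (\<forall>x\<in>S. \<forall>\<^sub>F (x', y) in uniformity. x' = x \<longrightarrow> y \<in> S)"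

definition sgn_endo :: "'a endo \<Rightarrow> 'a endo"
  where "sgn_endo x = inverse (norm x) *\<^sub>R x"

instance
proof
  fix a b c :: "'a endo" and r s :: real
  show "a + b + c = a + (b + c)" "a + b = b + a" "0 + a = a" "- a + a = 0" "a - b = a + - b"
    by (transfer; simp add: algebra_simps)+
  show "r *\<^sub>R (a + b) = r *\<^sub>R a + r *\<^sub>R b" "(r + s) *\<^sub>R a = r *\<^sub>R a + s *\<^sub>R a"
    "r *\<^sub>R s *\<^sub>R a = (r * s) *\<^sub>R a" "1 *\<^sub>R a = a"
    by (transfer; simp add: scaleR_add_right scaleR_add_left)+
  show "a * b * c = a * (b * c)" "(a + b) * c = a * c + b * c" "a * (b + c) = a * b + a * c"
    "r *\<^sub>R a * b = r *\<^sub>R (a * b)" "a * r *\<^sub>R b = r *\<^sub>R (a * b)" "1 * a = a" "a * 1 = a"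
    by (transfer; rule blinfun_eqI; simp add: blinfun.bilinear_simps)+
  show "(0::'a endo) \<noteq> 1"
  proof transfer
    obtain x :: 'a where "x \<noteq> 0"
      using nonzero_Basis nonempty_Basis by blast
    then show "(0::'a \<Rightarrow>\<^sub>L 'a) \<noteq> id_blinfun"
      by (metis blinfun.zero_left blinfun_apply_id_blinfun)
  qed
  show "(norm a = 0) = (a = 0)" "norm (a + b) \<le> norm a + norm b"
    "norm (r *\<^sub>R a) = \<bar>r\<bar> * norm a" "norm (a * b) \<le> norm a * norm b" "norm (1::'a endo) = 1"
    by (transfer; simp add: norm_triangle_ineq norm_blinfun_compose)+
qed (simp_all add: dist_endo_def sgn_endo_def uniformity_endo_def open_endo_def)

end

instance endo :: (euclidean_space) banach
proof
  fix X :: "nat \<Rightarrow> 'a endo"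
  have dist_eq: "dist a b = dist (blinfun_of_endo a) (blinfun_of_endo b)" for a b :: "'a endo"
    unfolding dist_endo_def dist_norm by transfer simp
  assume "Cauchy X"
  then have "Cauchy (\<lambda>n. blinfun_of_endo (X n))"
    unfolding Cauchy_def dist_eq .
  then obtain L where "(\<lambda>n. blinfun_of_endo (X n)) \<longlonglongrightarrow> L"
    using Cauchy_convergent_iff convergent_def by blast
  then have "X \<longlonglongrightarrow> endo_of_blinfun L"
    unfolding lim_sequentially dist_eq by (simp add: endo_of_blinfun_inverse)
  then show "convergent X"
    by (rule convergentI)
qed

lift_definition endo_apply :: "'a::euclidean_space endo \<Rightarrow> 'a \<Rightarrow> 'a" is blinfun_apply .

lift_definition Endo :: "('a::euclidean_space \<Rightarrow> 'a) \<Rightarrow> 'a endo" is Blinfun .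

lemma endo_apply_Endo: "linear f \<Longrightarrow> endo_apply (Endo f) = f"
  by transfer (simp add: bounded_linear_Blinfun_apply linear_conv_bounded_linear)

lemma endo_apply_inject: "endo_apply E = endo_apply F \<longleftrightarrow> E = F"
  by transfer (simp add: blinfun_apply_inject)

lemma linear_endo_apply: "linear (endo_apply E)"
  by transfer (simp add: bounded_linear.linear blinfun.bounded_linear_right)

lemma endo_apply_times: "endo_apply (E * F) = endo_apply E \<circ> endo_apply F"
  by transfer auto

lemma endo_apply_plus: "endo_apply (E + F) x = endo_apply E x + endo_apply F x"
  by transfer (simp add: blinfun.bilinear_simps)

lemma endo_apply_scaleR: "endo_apply (r *\<^sub>R E) x = r *\<^sub>R endo_apply E x"
  by transfer (simp add: blinfun.bilinear_simps)

lemma endo_apply_one: "endo_apply 1 x = x"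
  by transfer simp

lemma endo_apply_zero: "endo_apply 0 x = 0"
  by transfer simp

lemma endo_apply_power: "endo_apply (E ^ n) = endo_apply E ^^ n"
  by (induction n) (auto simp: endo_apply_times fun_eq_iff endo_apply_one)

lemma bounded_linear_endo_apply_left: "bounded_linear (\<lambda>E. endo_apply E x)"
proof -
  have "bounded_linear blinfun_of_endo"
    by (rule bounded_linear_intro[where K=1])
      (simp_all add: plus_endo.rep_eq scaleR_endo.rep_eq norm_endo.rep_eq)
  then show ?thesis
    unfolding endo_apply.rep_eq using bounded_linear_compose[OF blinfun.bounded_linear_left] by blast
qed

lemma lexp_eq_exp_Endo:
  assumes "linear u"
  shows "lexp u = endo_apply (exp (Endo u))"
proof
  fix x
  have "endo_apply (exp (Endo u)) x = (\<Sum>n. endo_apply (Endo u ^ n /\<^sub>R fact n) x)"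
    unfolding exp_def
    using bounded_linear.suminf[OF bounded_linear_endo_apply_left summable_exp_generic] by metis
  also have "\<dots> = lexp u x"
    by (simp add: lexp_def endo_apply_scaleR endo_apply_power endo_apply_Endo[OF assms]
        divide_inverse_commute)
  finally show "lexp u x = endo_apply (exp (Endo u)) x" ..
qed

lemma Endo_linear_combination:
  assumes "linear f" "linear g"
  shows "Endo (\<lambda>x. r *\<^sub>R f x + g x) = r *\<^sub>R Endo f + Endo g"
proof -
  have "linear (\<lambda>x. r *\<^sub>R f x + g x)"
    using assms by (intro linear_compose_add linear_compose_scale_right)
  then show ?thesis
    by (simp add: endo_apply_inject[symmetric] fun_eq_iff endo_apply_plus endo_apply_scaleR
        endo_apply_Endo assms)
qed

lemma Endo_scaleR:
  assumes "linear f"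
  shows "Endo (\<lambda>x. r *\<^sub>R f x) = r *\<^sub>R Endo f"
  using Endo_linear_combination[OF assms linear_zero]
  by (simp add: Endo.abs_eq zero_blinfun.abs_eq zero_endo_def)

lemma Endo_commute_iff:
  assumes "linear f" "linear g"
  shows "Endo f * Endo g = Endo g * Endo f \<longleftrightarrow> f \<circ> g = g \<circ> f"
  by (simp add: endo_apply_inject[symmetric] endo_apply_times endo_apply_Endo assms)

lemma lexp_add_eq_comp_iff:
  assumes "linear f" "linear g"
  shows "lexp (\<lambda>x. c *\<^sub>R f x + g x) = lexp (\<lambda>x. c *\<^sub>R f x) \<circ> lexp g
    \<longleftrightarrow> exp (c *\<^sub>R Endo f + Endo g) = exp (c *\<^sub>R Endo f) * exp (Endo g)"
proof -
  have "linear (\<lambda>x. c *\<^sub>R f x)"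
    using assms(1) by (rule linear_compose_scale_right)
  moreover have "linear (\<lambda>x. c *\<^sub>R f x + g x)"
    using calculation assms(2) by (rule linear_compose_add)
  ultimately show ?thesis
    using assms
    by (simp add: lexp_eq_exp_Endo Endo_linear_combination Endo_scaleR
        flip: endo_apply_times endo_apply_inject)
qed

section \<open>Trace and coordinates\<close>

definition endo_trace :: "'a::euclidean_space endo \<Rightarrow> real"
  where "endo_trace E = (\<Sum>b\<in>Basis. endo_apply E b \<bullet> b)"

lemma endo_trace_add: "endo_trace (E + F) = endo_trace E + endo_trace F"
  by (simp add: endo_trace_def endo_apply_plus inner_add_left sum.distrib)

lemma endo_trace_scaleR: "endo_trace (r *\<^sub>R E) = r * endo_trace E"
  by (simp add: endo_trace_def endo_apply_scaleR sum_distrib_left)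

lemma endo_trace_diff: "endo_trace (E - F) = endo_trace E - endo_trace F"
  using endo_trace_add[of "E - F" F] by simp

lemma endo_trace_one: "endo_trace (1 :: 'a::euclidean_space endo) = DIM('a)"
  by (simp add: endo_trace_def endo_apply_one)

lemma endo_apply_times_inner:
  "endo_apply (E * F) x \<bullet> c = (\<Sum>d\<in>Basis. (endo_apply F x \<bullet> d) * (endo_apply E d \<bullet> c))"
proof -
  have "endo_apply E (endo_apply F x) = (\<Sum>d\<in>Basis. (endo_apply F x \<bullet> d) *\<^sub>R endo_apply E d)"
    by (subst euclidean_representation[symmetric, of "endo_apply F x"])
      (simp add: linear_sum[OF linear_endo_apply] linear_scale[OF linear_endo_apply])
  then show ?thesis
    by (simp add: endo_apply_times inner_sum_left)
qed

lemma endo_trace_commute: "endo_trace (E * F) = endo_trace (F * E)"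
  unfolding endo_trace_def endo_apply_times_inner by (subst sum.swap) (simp add: mult.commute)

lemma endo_trace_commutator: "endo_trace (E * F - F * E) = 0"
  by (simp add: endo_trace_diff endo_trace_commute)

lemma scaleR_one_add_traceless_eqD:
  assumes "x *\<^sub>R 1 + X = y *\<^sub>R 1 + (Y :: 'a::euclidean_space endo)"
    and "endo_trace X = 0" "endo_trace Y = 0"
  shows "x = y \<and> X = Y"
proof -
  have "x * DIM('a) = y * DIM('a)"
    using arg_cong[OF assms(1), of endo_trace] assms(2,3)
    by (simp add: endo_trace_add endo_trace_scaleR endo_trace_one)
  then show ?thesis
    using assms(1) by simp
qed

lemma endo_eqI_entries:
  assumes "\<And>b c. b \<in> Basis \<Longrightarrow> c \<in> Basis \<Longrightarrow> endo_apply E b \<bullet> c = endo_apply F b \<bullet> c"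
  shows "E = F"
proof -
  have "endo_apply E = endo_apply F"
    by (intro linear_eq_stdbasis linear_endo_apply) (rule euclidean_eqI, rule assms)
  then show ?thesis
    by (simp add: endo_apply_inject)
qed

lemma inner_Basis_2d:
  assumes "Basis = {e1, e2}" "e1 \<noteq> e2"
  shows "e1 \<bullet> e1 = 1" "e2 \<bullet> e2 = 1" "e1 \<bullet> e2 = 0" "e2 \<bullet> e1 = 0"
proof -
  have "e1 \<in> Basis" "e2 \<in> Basis"
    using assms(1) by auto
  then show "e1 \<bullet> e1 = 1" "e2 \<bullet> e2 = 1" "e1 \<bullet> e2 = 0" "e2 \<bullet> e1 = 0"
    using assms(2) by (simp_all add: inner_Basis)
qed

lemma endo_trace_2d:
  assumes "Basis = {e1, e2}" "e1 \<noteq> e2"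
  shows "endo_trace E = endo_apply E e1 \<bullet> e1 + endo_apply E e2 \<bullet> e2"
  unfolding endo_trace_def assms(1) using assms(2) by simp

lemma endo_apply_times_inner_2d:
  assumes "Basis = {e1, e2}" "e1 \<noteq> e2"
  shows "endo_apply (E * F) x \<bullet> c
    = (endo_apply F x \<bullet> e1) * (endo_apply E e1 \<bullet> c) + (endo_apply F x \<bullet> e2) * (endo_apply E e2 \<bullet> c)"
  unfolding endo_apply_times_inner assms(1) using assms(2) by simp

section \<open>Traceless endomorphisms of the plane\<close>

lemma traceless_square_2d:
  fixes X :: "'a::euclidean_space endo"
  assumes "DIM('a) = 2" "endo_trace X = 0"
  shows "X * X = (endo_trace (X * X) / 2) *\<^sub>R 1"
proof -
  obtain e1 e2 :: 'a where B: "Basis = {e1, e2}" "e1 \<noteq> e2"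
    using assms(1) card_2_iff by metis
  note coords = endo_apply_times_inner_2d[OF B] endo_trace_2d[OF B] inner_Basis_2d[OF B]
  have "endo_apply X e2 \<bullet> e2 = - (endo_apply X e1 \<bullet> e1)"
    using assms(2) by (simp add: coords)
  then show ?thesis
    by (intro endo_eqI_entries)
      (auto simp: B coords endo_apply_scaleR endo_apply_one power2_eq_square algebra_simps)
qed

lemma null_orthogonal_to_negative_eq_0:
  fixes p q r x y z :: real
  assumes neg: "p\<^sup>2 + q * r < 0" and orth: "2 * p * x + q * z + r * y = 0" and null: "x\<^sup>2 + y * z = 0"
  shows "x = 0 \<and> y = 0 \<and> z = 0"
proof -
  have "(q * x - p * y)\<^sup>2 - (p\<^sup>2 + q * r) * y\<^sup>2 = q\<^sup>2 * (x\<^sup>2 + y * z) - q * y * (2 * p * x + q * z + r * y)"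
    by (simp add: power2_eq_square algebra_simps)
  then have "(q * x - p * y)\<^sup>2 - (p\<^sup>2 + q * r) * y\<^sup>2 = 0"
    using orth null by simp
  moreover have "(p\<^sup>2 + q * r) * y\<^sup>2 \<le> 0"
    using neg by (simp add: mult_nonpos_nonneg)
  ultimately have "(q * x - p * y)\<^sup>2 = 0" "(p\<^sup>2 + q * r) * y\<^sup>2 = 0"
    by (smt (verit) zero_le_power2)+
  have "q \<noteq> 0"
  proof
    assume "q = 0"
    with neg show False
      by simp
  qed
  have "y = 0"
    using \<open>(p\<^sup>2 + q * r) * y\<^sup>2 = 0\<close> neg by simp
  moreover have "x = 0"
    using \<open>(q * x - p * y)\<^sup>2 = 0\<close> \<open>q \<noteq> 0\<close> \<open>y = 0\<close> by simp
  moreover have "z = 0"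
    using orth \<open>q \<noteq> 0\<close> \<open>x = 0\<close> \<open>y = 0\<close> by simp
  ultimately show ?thesis
    by simp
qed

lemma anticommuting_nilpotent_eq_0_2d:
  fixes A K :: "'a::euclidean_space endo"
  assumes "DIM('a) = 2" "endo_trace A = 0" "endo_trace K = 0"
    and "A * A = a *\<^sub>R 1" "a < 0" "K * K = 0" "A * K + K * A = 0"
  shows "K = 0"
proof -
  obtain e1 e2 :: 'a where B: "Basis = {e1, e2}" "e1 \<noteq> e2"
    using assms(1) card_2_iff by metis
  note coords = endo_apply_times_inner_2d[OF B] endo_trace_2d[OF B] inner_Basis_2d[OF B]
  define p q r where "p = endo_apply A e1 \<bullet> e1" and "q = endo_apply A e2 \<bullet> e1"
    and "r = endo_apply A e1 \<bullet> e2"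
  define x y z where "x = endo_apply K e1 \<bullet> e1" and "y = endo_apply K e2 \<bullet> e1"
    and "z = endo_apply K e1 \<bullet> e2"
  have trA: "endo_apply A e2 \<bullet> e2 = - p" and trK: "endo_apply K e2 \<bullet> e2 = - x"
    using assms(2,3) by (simp_all add: coords p_def x_def)
  have "p\<^sup>2 + q * r = a"
    using arg_cong[OF assms(4), of "\<lambda>E. endo_apply E e1 \<bullet> e1"]
    by (simp add: coords endo_apply_scaleR endo_apply_one p_def q_def r_def power2_eq_square mult.commute)
  moreover have "x\<^sup>2 + y * z = 0"
    using arg_cong[OF assms(6), of "\<lambda>E. endo_apply E e1 \<bullet> e1"]
    by (simp add: coords x_def y_def z_def power2_eq_square endo_apply_zero mult.commute)
  moreover have "2 * p * x + q * z + r * y = 0"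
    using arg_cong[OF assms(7), of "\<lambda>E. endo_apply E e1 \<bullet> e1"]
    by (simp add: coords endo_apply_plus p_def q_def r_def x_def y_def z_def endo_apply_zero algebra_simps)
  ultimately have "x = 0 \<and> y = 0 \<and> z = 0"
    using \<open>a < 0\<close> by (intro null_orthogonal_to_negative_eq_0[of p q r]) simp_all
  then show ?thesis
    by (intro endo_eqI_entries) (auto simp: B trK x_def y_def z_def endo_apply_zero)
qed

lemma scalar_squares_traceless_2d:
  fixes A B :: "'a::euclidean_space endo"
  assumes "DIM('a) = 2" "endo_trace A = 0" "endo_trace B = 0"
  shows "scalar_squares A B (endo_trace (A * A) / 2) (endo_trace (B * B) / 2) (endo_trace (A * B) / 2)"
proof -
  define a b s where "a = endo_trace (A * A) / 2" and "b = endo_trace (B * B) / 2"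
    and "s = endo_trace (A * B) / 2"
  have "endo_trace ((A + B) * (A + B)) / 2 = a + 2 * s + b"
    by (simp add: a_def b_def s_def algebra_simps endo_trace_add endo_trace_commute[of B A])
  moreover have "(A + B) * (A + B) = (endo_trace ((A + B) * (A + B)) / 2) *\<^sub>R 1"
    using assms by (intro traceless_square_2d) (simp_all add: endo_trace_add)
  ultimately have sq: "A * A = a *\<^sub>R 1" "B * B = b *\<^sub>R 1" "(A + B) * (A + B) = (a + 2 * s + b) *\<^sub>R 1"
    unfolding a_def b_def using traceless_square_2d[OF assms(1)] assms(2,3) by simp_all
  have "scalar_squares A B a b s"
  proof
    have "A * B + B * A = (A + B) * (A + B) - A * A - B * B"
      by (simp add: algebra_simps)
    then show "A * B + B * A = (2 * s) *\<^sub>R 1"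
      by (simp add: sq scaleR_add_left scaleR_diff_left)
  qed (fact sq)+
  then show ?thesis
    by (simp only: a_def b_def s_def)
qed

lemma exp_add_imp_traceless_part_eq:
  fixes A B :: "'a::euclidean_space endo"
  assumes "scalar_squares A B a b s" "endo_trace A = 0" "endo_trace B = 0"
    and "exp (A + B) = exp A * exp B"
  shows "sinhc_sqrt (a + 2 * s + b) *\<^sub>R (A + B)
      = (sinhc_sqrt a * cosh_sqrt b) *\<^sub>R A + (cosh_sqrt a * sinhc_sqrt b) *\<^sub>R B
        + (sinhc_sqrt a * sinhc_sqrt b / 2) *\<^sub>R (A * B - B * A)"
proof -
  interpret scalar_squares A B a b s by fact
  have "exp A * exp B = (cosh_sqrt a *\<^sub>R 1 + sinhc_sqrt a *\<^sub>R A) * (cosh_sqrt b *\<^sub>R 1 + sinhc_sqrt b *\<^sub>R B)"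
    by (simp add: exp_eq_if_square_scalar square_A square_B)
  also have "\<dots> = (cosh_sqrt a * cosh_sqrt b + sinhc_sqrt a * sinhc_sqrt b * s) *\<^sub>R 1
      + ((sinhc_sqrt a * cosh_sqrt b) *\<^sub>R A + (cosh_sqrt a * sinhc_sqrt b) *\<^sub>R B
        + (sinhc_sqrt a * sinhc_sqrt b / 2) *\<^sub>R (A * B - B * A))"
    by (simp add: BA_eq algebra_simps; simp add: algebra_simps flip: scaleR_add_left add.assoc)
  finally have "cosh_sqrt (a + 2 * s + b) *\<^sub>R 1 + sinhc_sqrt (a + 2 * s + b) *\<^sub>R (A + B)
      = (cosh_sqrt a * cosh_sqrt b + sinhc_sqrt a * sinhc_sqrt b * s) *\<^sub>R 1
      + ((sinhc_sqrt a * cosh_sqrt b) *\<^sub>R A + (cosh_sqrt a * sinhc_sqrt b) *\<^sub>R B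
        + (sinhc_sqrt a * sinhc_sqrt b / 2) *\<^sub>R (A * B - B * A))"
    using assms(4) by (simp add: exp_eq_if_square_scalar square_add)
  then show ?thesis
    using assms(2,3) by (auto dest!: scaleR_one_add_traceless_eqD
        simp: endo_trace_add endo_trace_scaleR endo_trace_commutator)
qed

lemma traceless_commute_if_exp_add_at_integers:
  fixes A B :: "'a::euclidean_space endo" and t :: "nat \<Rightarrow> int"
  assumes "DIM('a) = 2" "endo_trace A = 0" "endo_trace B = 0" "strict_mono t" "t 0 = 1"
    and exp_eq: "\<And>n. exp (of_int (t n) *\<^sub>R A + B) = exp (of_int (t n) *\<^sub>R A) * exp B"
  shows "A * B = B * A"
proof (rule ccontr)
  assume noncomm: "A * B \<noteq> B * A"
  define a b s where "a = endo_trace (A * A) / 2" and "b = endo_trace (B * B) / 2"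
    and "s = endo_trace (A * B) / 2"
  interpret scalar_squares A B a b s
    unfolding a_def b_def s_def by (rule scalar_squares_traceless_2d[OF assms(1-3)])
  have zeros: "sinhc_sqrt ((t n)\<^sup>2 * a) = 0 \<and> sinhc_sqrt b = 0
      \<and> sinhc_sqrt ((t n)\<^sup>2 * a + 2 * (t n * s) + b) = 0" for n
  proof -
    have "t n \<noteq> 0"
      using strict_mono_int_ge[OF assms(4), of n] assms(5) by simp
    then have "(of_int (t n) *\<^sub>R A) * B \<noteq> B * (of_int (t n) *\<^sub>R A)"
      using noncomm by simp
    moreover have scaled: "scalar_squares (of_int (t n) *\<^sub>R A) B ((t n)\<^sup>2 * a) b (t n * s)"
      using scaleR_left by simp
    moreover have "endo_trace (of_int (t n) *\<^sub>R A) = 0"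
      using assms(2) by (simp add: endo_trace_scaleR)
    ultimately show ?thesis
      using scalar_squares.sinhc_sqrt_eq_0_if_noncommuting[OF scaled]
        exp_add_imp_traceless_part_eq[OF scaled _ assms(3) exp_eq[of n]] by blast
  qed
  have "sinhc_sqrt a = 0" "sinhc_sqrt b = 0"
    using zeros[of 0] assms(5) by simp_all
  then have "s\<^sup>2 = a * b"
    using zeros by (intro sinhc_sqrt_zeros_along_quadratic[OF assms(4,5)]) (simp_all add: mult.assoc)
  then have "(A * B - B * A) * (A * B - B * A) = 0"
    by (simp add: commutator_square)
  moreover obtain k :: nat where "a = - (k * pi)\<^sup>2" "k > 0"
    using sinhc_sqrt_eq_0E \<open>sinhc_sqrt a = 0\<close> by blast
  then have "a < 0"
    by simp
  ultimately have "A * B - B * A = 0"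
    using anticommuting_nilpotent_eq_0_2d assms(1,2) square_A anticommute_commutator
      endo_trace_commutator by blast
  with noncomm show False
    by simp
qed

lemma commute_if_exp_add_at_integers:
  fixes F G :: "'a::euclidean_space endo" and t :: "nat \<Rightarrow> int"
  assumes "DIM('a) = 2" "strict_mono t" "t 0 = 1"
    and exp_eq: "\<And>n. exp (of_int (t n) *\<^sub>R F + G) = exp (of_int (t n) *\<^sub>R F) * exp G"
  shows "F * G = G * F"
proof -
  define x y where "x = endo_trace F / 2" and "y = endo_trace G / 2"
  define A B where "A = F - x *\<^sub>R 1" and "B = G - y *\<^sub>R 1"
  have "endo_trace A = 0" "endo_trace B = 0"
    using assms(1) by (simp_all add: A_def B_def x_def y_def endo_trace_diff endo_trace_scaleR endo_trace_one)
  moreover have "exp (of_int (t n) *\<^sub>R A + B) = exp (of_int (t n) *\<^sub>R A) * exp B" for n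
  proof -
    have "of_int (t n) *\<^sub>R F = (of_int (t n) * x) *\<^sub>R 1 + of_int (t n) *\<^sub>R A" "G = y *\<^sub>R 1 + B"
      by (simp_all add: A_def B_def algebra_simps)
    then show ?thesis
      using exp_eq[of n] by (simp only: exp_add_scalar_shift_iff)
  qed
  ultimately have "A * B = B * A"
    using traceless_commute_if_exp_add_at_integers assms(1-3) by blast
  then show ?thesis
    by (simp add: A_def B_def algebra_simps)
qed

theorem theorem1:
  fixes f g :: "'a::euclidean_space \<Rightarrow> 'a" and t :: "nat \<Rightarrow> int"
  assumes "DIM('a) = 2"
    and "linear f" and "linear g"
    and "strict_mono t" and "t 0 = 1"
  shows "(\<forall>n. lexp (\<lambda>x. of_int (t n) *\<^sub>R f x + g x)
               = lexp (\<lambda>x. of_int (t n) *\<^sub>R f x) \<circ> lexp g)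
         \<longleftrightarrow> f \<circ> g = g \<circ> f"
proof
  assume "\<forall>n. lexp (\<lambda>x. of_int (t n) *\<^sub>R f x + g x) = lexp (\<lambda>x. of_int (t n) *\<^sub>R f x) \<circ> lexp g"
  then have "Endo f * Endo g = Endo g * Endo f"
    using lexp_add_eq_comp_iff[OF assms(2,3)]
    by (intro commute_if_exp_add_at_integers[OF assms(1,4,5)]) blast
  then show "f \<circ> g = g \<circ> f"
    using Endo_commute_iff[OF assms(2,3)] by blast
next
  assume "f \<circ> g = g \<circ> f"
  then have "(c *\<^sub>R Endo f) * Endo g = Endo g * (c *\<^sub>R Endo f)" for c
    using Endo_commute_iff[OF assms(2,3)] by simp
  then show "\<forall>n. lexp (\<lambda>x. of_int (t n) *\<^sub>R f x + g x) = lexp (\<lambda>x. of_int (t n) *\<^sub>R f x) \<circ> lexp g"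
    using lexp_add_eq_comp_iff[OF assms(2,3)] exp_add_commuting by blast
qed

end
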